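(* Let $G$ be a connected twin-free bipartite graph of order $n \ge 2$. Then $i_{\max}(G) \ge \lceil n/2\rceil+1$, and this inequality is sharp.
   Context: $i_{\max}(G)$ denotes the number of maximal independent sets of $G$. A graph is twin-free if no two vertices have the same open neighbourhood. *)

theory Defs
  imports Complex_Main
begin

definition simple_graph :: "'a set \<Rightarrow> ('a \<Rightarrow> 'a \<Rightarrow> bool) \<Rightarrow> bool" where
  "simple_graph V E \<longleftrightarrow> finite V \<and> (\<forall>u v. E u v \<longrightarrow> u \<in> V \<and> v \<in> V)
     \<and> (\<forall>u v. E u v \<longrightarrow> E v u) \<and> (\<forall>v. \<not> E v v)"

definition connected_graph :: "'a set \<Rightarrow> ('a \<Rightarrow> 'a \<Rightarrow> bool) \<Rightarrow> bool" where
  "connected_graph V E \<longleftrightarrow> V \<noteq> {} \<and>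
     (\<forall>u\<in>V. \<forall>v\<in>V. (\<lambda>x y. x \<in> V \<and> y \<in> V \<and> E x y)\<^sup>*\<^sup>* u v)"

definition bipartite :: "'a set \<Rightarrow> ('a \<Rightarrow> 'a \<Rightarrow> bool) \<Rightarrow> bool" where
  "bipartite V E \<longleftrightarrow> (\<exists>A B. A \<union> B = V \<and> A \<inter> B = {} \<and>
     (\<forall>u v. E u v \<longrightarrow> (u \<in> A \<and> v \<in> B) \<or> (u \<in> B \<and> v \<in> A)))"

definition open_nbhd :: "'a set \<Rightarrow> ('a \<Rightarrow> 'a \<Rightarrow> bool) \<Rightarrow> 'a \<Rightarrow> 'a set" where
  "open_nbhd V E v = {u \<in> V. E v u}"

definition twin_free :: "'a set \<Rightarrow> ('a \<Rightarrow> 'a \<Rightarrow> bool) \<Rightarrow> bool" where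
  "twin_free V E \<longleftrightarrow> (\<forall>u\<in>V. \<forall>v\<in>V. u \<noteq> v \<longrightarrow> open_nbhd V E u \<noteq> open_nbhd V E v)"

definition independent_set :: "'a set \<Rightarrow> ('a \<Rightarrow> 'a \<Rightarrow> bool) \<Rightarrow> 'a set \<Rightarrow> bool" where
  "independent_set V E S \<longleftrightarrow> S \<subseteq> V \<and> (\<forall>u\<in>S. \<forall>v\<in>S. \<not> E u v)"

definition maximal_independent_set :: "'a set \<Rightarrow> ('a \<Rightarrow> 'a \<Rightarrow> bool) \<Rightarrow> 'a set \<Rightarrow> bool" where
  "maximal_independent_set V E S \<longleftrightarrow> independent_set V E S \<and>
     (\<forall>T. independent_set V E T \<and> S \<subseteq> T \<longrightarrow> T = S)"

definition i_max :: "'a set \<Rightarrow> ('a \<Rightarrow> 'a \<Rightarrow> bool) \<Rightarrow> nat" where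
  "i_max V E = card {S. maximal_independent_set V E S}"

end

theory Submission
  imports Defs
begin

(* Let A, B be the two sides of a bipartition, |A| >= n/2.  As G is connected with n >= 2, no
   vertex is isolated, so B is a maximal independent set.  For a in A, the vertices of A whose
   neighbourhood lies in N(a), together with B - N(a), form a maximal independent set containing a;
   twin-freeness makes these |A| sets pairwise distinct, and none of them is B.

   Sharpness: in the half graph on a_0..a_(k-1), b_0..b_(k-1) with a_i b_j adjacent iff i <= j,
   every maximal independent set is {a_t, ..., a_(k-1), b_0, ..., b_(t-1)} for some t <= k. *)

lemma maximal_independent_setI:
  assumes "independent_set V E S" and "\<And>v. v \<in> V - S \<Longrightarrow> \<exists>u\<in>S. E v u"
  shows "maximal_independent_set V E S"
  unfolding maximal_independent_set_def
proof (intro conjI allI impI assms(1))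
  fix T assume T: "independent_set V E T \<and> S \<subseteq> T"
  show "T = S"
  proof (rule ccontr)
    assume "T \<noteq> S"
    then obtain v where "v \<in> T" "v \<notin> S" using T by blast
    moreover from this have "v \<in> V" using T by (auto simp: independent_set_def)
    ultimately show False using assms(2) T by (fastforce simp: independent_set_def)
  qed
qed

lemma finite_maximal_independent_sets:
  assumes "finite V"
  shows "finite {S. maximal_independent_set V E S}"
  by (rule finite_subset[of _ "Pow V"])
     (use assms in \<open>auto simp: maximal_independent_set_def independent_set_def\<close>)

lemma connected_graph_no_isolated_vertex:
  assumes "connected_graph V E" and "card V \<ge> 2" and "v \<in> V"
  shows "\<exists>w. E v w"
proof -
  have "\<not> V \<subseteq> {v}"
    using assms(2) card_mono[of "{v}" V] by fastforce
  then obtain u where u: "u \<in> V" "u \<noteq> v" by blast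
  have "(\<lambda>x y. x \<in> V \<and> y \<in> V \<and> E x y)\<^sup>*\<^sup>* v u"
    using assms(1,3) u by (auto simp: connected_graph_def)
  then show ?thesis
    by (rule converse_rtranclpE) (use u in auto)
qed

lemma connected_graphI_root:
  assumes "simple_graph V E" and "r \<in> V"
    and "\<And>v. v \<in> V \<Longrightarrow> (\<lambda>x y. x \<in> V \<and> y \<in> V \<and> E x y)\<^sup>*\<^sup>* v r"
  shows "connected_graph V E"
proof -
  let ?R = "\<lambda>x y. x \<in> V \<and> y \<in> V \<and> E x y"
  have "?R\<inverse>\<inverse> = ?R"
    using assms(1) by (auto simp: simple_graph_def fun_eq_iff)
  then have "?R\<^sup>*\<^sup>* r v" if "v \<in> V" for v
    using rtranclp_converseI[of ?R, OF assms(3)[OF that]] by simp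
  then show ?thesis
    using assms(2,3) by (auto simp: connected_graph_def intro: rtranclp_trans)
qed

locale bipartition =
  fixes V :: "'a set" and E A B
  assumes graph: "simple_graph V E"
    and cover: "A \<union> B = V" and disjoint: "A \<inter> B = {}"
    and crossing: "\<And>u v. E u v \<Longrightarrow> (u \<in> A \<and> v \<in> B) \<or> (u \<in> B \<and> v \<in> A)"
begin

lemma swap: "bipartition V E B A"
  using graph cover disjoint crossing by unfold_locales blast+

lemma open_nbhd_subset: "a \<in> A \<Longrightarrow> open_nbhd V E a \<subseteq> B"
  using crossing disjoint by (auto simp: open_nbhd_def)

lemma independent_side: "independent_set V E B"
  using cover crossing disjoint by (auto simp: independent_set_def)

lemma maximal_independent_side:
  assumes "\<And>a. a \<in> A \<Longrightarrow> \<exists>b. E a b"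
  shows "maximal_independent_set V E B"
proof (rule maximal_independent_setI[OF independent_side])
  fix v assume "v \<in> V - B"
  then obtain b where "E v b" using assms cover by blast
  then show "\<exists>u\<in>B. E v u" using \<open>v \<in> V - B\<close> crossing by blast
qed

definition down_set :: "'a \<Rightarrow> 'a set" where
  "down_set a = {a' \<in> A. open_nbhd V E a' \<subseteq> open_nbhd V E a} \<union> (B - open_nbhd V E a)"

lemma maximal_independent_down_set:
  assumes "a \<in> A"
  shows "maximal_independent_set V E (down_set a)"
proof (rule maximal_independent_setI)
  show "independent_set V E (down_set a)"
    unfolding independent_set_def
  proof (intro conjI ballI notI)
    show "down_set a \<subseteq> V" using cover by (auto simp: down_set_def)
    fix u v assume "u \<in> down_set a" "v \<in> down_set a" "E u v"
    moreover have "u \<in> open_nbhd V E v" "v \<in> open_nbhd V E u"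
      using graph \<open>E u v\<close> by (auto simp: simple_graph_def open_nbhd_def)
    ultimately show False
      using crossing disjoint unfolding down_set_def by blast
  qed
next
  fix v assume v: "v \<in> V - down_set a"
  show "\<exists>u\<in>down_set a. E v u"
  proof (cases "v \<in> A")
    case True
    then obtain b where "b \<in> open_nbhd V E v" "b \<notin> open_nbhd V E a"
      using v by (auto simp: down_set_def)
    then show ?thesis
      using open_nbhd_subset[OF True] by (auto simp: down_set_def open_nbhd_def)
  next
    case False
    then have "E a v" using v cover by (auto simp: down_set_def open_nbhd_def)
    then have "E v a" using graph by (simp add: simple_graph_def)
    moreover have "a \<in> down_set a" using assms by (simp add: down_set_def)
    ultimately show ?thesis by blast
  qed
qed

lemma inj_on_down_set:
  assumes "twin_free V E"
  shows "inj_on down_set A"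
proof (rule inj_onI)
  fix a a' assume a: "a \<in> A" "a' \<in> A" and "down_set a = down_set a'"
  then have "B - open_nbhd V E a = B - open_nbhd V E a'"
    using disjoint by (auto simp: down_set_def)
  then have "open_nbhd V E a = open_nbhd V E a'"
    using open_nbhd_subset[OF a(1)] open_nbhd_subset[OF a(2)] by blast
  then show "a = a'" using assms a cover by (auto simp: twin_free_def)
qed

lemma card_side_less_i_max:
  assumes "twin_free V E" and "\<And>a. a \<in> A \<Longrightarrow> \<exists>b. E a b"
  shows "card A < i_max V E"
proof -
  have "B \<notin> down_set ` A"
    using disjoint by (auto simp: down_set_def)
  moreover have "finite A"
    using graph cover by (auto simp: simple_graph_def)
  ultimately have "card (insert B (down_set ` A)) = card A + 1"
    using inj_on_down_set[OF assms(1)] by (simp add: card_image)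
  moreover have "card (insert B (down_set ` A)) \<le> i_max V E"
    unfolding i_max_def
  proof (rule card_mono)
    show "finite {S. maximal_independent_set V E S}"
      using graph by (intro finite_maximal_independent_sets) (simp add: simple_graph_def)
    show "insert B (down_set ` A) \<subseteq> {S. maximal_independent_set V E S}"
      using maximal_independent_side[OF assms(2)] maximal_independent_down_set by auto
  qed
  ultimately show ?thesis
    by simp
qed

end

lemma bipartite_iff_bipartition:
  assumes "simple_graph V E"
  shows "bipartite V E \<longleftrightarrow> (\<exists>A B. bipartition V E A B)"
  using assms by (auto simp: bipartite_def bipartition_def)

theorem i_max_lower_bound:
  assumes "simple_graph V E" "connected_graph V E" "twin_free V E" "bipartite V E"
    and "card V \<ge> 2"
  shows "\<lceil>real (card V) / 2\<rceil> + 1 \<le> int (i_max V E)"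
proof -
  obtain A B where "bipartition V E A B"
    using assms(1,4) bipartite_iff_bipartition by blast
  then interpret bipartition V E A B .
  have no_isolated: "\<And>v. v \<in> V \<Longrightarrow> \<exists>w. E v w"
    using connected_graph_no_isolated_vertex[OF assms(2,5)] .
  have "card A < i_max V E"
    using card_side_less_i_max[OF assms(3)] no_isolated cover by blast
  moreover have "card B < i_max V E"
    using bipartition.card_side_less_i_max[OF swap assms(3)] no_isolated cover by blast
  moreover have "card A + card B = card V"
    using graph cover disjoint by (metis card_Un_disjoint finite_Un simple_graph_def)
  ultimately have "real (card V) / 2 \<le> real (i_max V E) - 1"
    by linarith
  then have "\<lceil>real (card V) / 2\<rceil> \<le> int (i_max V E) - 1"
    by (intro ceiling_le) simp
  then show ?thesis
    by simp
qed

(* Vertex a_i of the half graph is i and vertex b_j is k + j. *)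
definition half_graph :: "nat \<Rightarrow> nat \<Rightarrow> nat \<Rightarrow> bool" where
  "half_graph k x y \<longleftrightarrow>
     (x < k \<and> y < 2*k \<and> x + k \<le> y) \<or> (y < k \<and> x < 2*k \<and> y + k \<le> x)"

lemma open_nbhd_half_graph_low:
  "i < k \<Longrightarrow> open_nbhd {0..<2*k} (half_graph k) i = {i+k..<2*k}"
  by (auto simp: open_nbhd_def half_graph_def)

lemma open_nbhd_half_graph_high:
  "k \<le> j \<Longrightarrow> j < 2*k \<Longrightarrow> open_nbhd {0..<2*k} (half_graph k) j = {0..j-k}"
  by (auto simp: open_nbhd_def half_graph_def)

lemma half_graph_bipartition: "bipartition {0..<2*k} (half_graph k) {0..<k} {k..<2*k}"
  by unfold_locales (auto simp: simple_graph_def half_graph_def)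

lemma bipartite_half_graph: "bipartite {0..<2*k} (half_graph k)"
  using half_graph_bipartition bipartite_iff_bipartition bipartition.graph by blast

lemma connected_half_graph:
  assumes "k \<ge> 1"
  shows "connected_graph {0..<2*k} (half_graph k)"
proof (rule connected_graphI_root[where r = 0])
  show "simple_graph {0..<2*k} (half_graph k)"
    using bipartition.graph[OF half_graph_bipartition] .
  let ?R = "\<lambda>x y. x \<in> {0..<2*k} \<and> y \<in> {0..<2*k} \<and> half_graph k x y"
  fix v assume v: "v \<in> {0..<2*k}"
  show "?R\<^sup>*\<^sup>* v 0"
  proof (cases "v < k")
    case True
    then have "?R v (2*k-1)" "?R (2*k-1) 0" using assms by (auto simp: half_graph_def)
    then show ?thesis
      using converse_rtranclp_into_rtranclp[of ?R, OF _ r_into_rtranclp[of ?R]] by blast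
  next
    case False
    then have "?R v 0" using v assms by (auto simp: half_graph_def)
    then show ?thesis by blast
  qed
qed (use assms in auto)

lemma twin_free_half_graph: "twin_free {0..<2*k} (half_graph k)"
  unfolding twin_free_def
proof (intro ballI impI)
  fix u v :: nat assume "u \<in> {0..<2*k}" "v \<in> {0..<2*k}" "u \<noteq> v"
  then consider "u < k" "v < k" | "u < k" "k \<le> v" "v < 2*k" | "k \<le> u" "u < 2*k" "v < k"
    | "k \<le> u" "u < 2*k" "k \<le> v" "v < 2*k"
    by fastforce
  then show "open_nbhd {0..<2*k} (half_graph k) u \<noteq> open_nbhd {0..<2*k} (half_graph k) v"
  proof cases
    case 1
    then show ?thesis
      using \<open>u \<noteq> v\<close> by (simp add: open_nbhd_half_graph_low atLeastLessThan_eq_iff)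
  next
    case 4
    then show ?thesis
      using \<open>u \<noteq> v\<close> by (simp add: open_nbhd_half_graph_high)
  qed (force simp: open_nbhd_half_graph_low open_nbhd_half_graph_high)+
qed

definition half_graph_mis :: "nat \<Rightarrow> nat \<Rightarrow> nat set" where
  "half_graph_mis k t = {t..<k} \<union> {k..<k+t}"

lemma maximal_independent_set_half_graph:
  assumes "maximal_independent_set {0..<2*k} (half_graph k) I"
  shows "\<exists>t\<le>k. I = half_graph_mis k t"
proof -
  have I: "I \<subseteq> {0..<2*k}" "\<And>x y. x \<in> I \<Longrightarrow> y \<in> I \<Longrightarrow> \<not> half_graph k x y"
    using assms by (auto simp: maximal_independent_set_def independent_set_def)
  define t where "t = Min (insert k (I \<inter> {..<k}))"
  have t: "t \<le> k" "\<And>i. i \<in> I \<Longrightarrow> i < k \<Longrightarrow> t \<le> i" "t < k \<Longrightarrow> t \<in> I"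
    unfolding t_def using Min_in[of "insert k (I \<inter> {..<k})"] by auto
  have "x < k + t" if "x \<in> I" "k \<le> x" for x
  proof (rule ccontr)
    assume "\<not> x < k + t"
    moreover have "x < 2*k" using that I(1) by auto
    ultimately have "half_graph k t x" and "t \<in> I"
      using t(3) by (auto simp: half_graph_def)
    then show False using I(2) that(1) by blast
  qed
  then have "I \<subseteq> half_graph_mis k t"
    using t(2) by (force simp: half_graph_mis_def)
  moreover have "independent_set {0..<2*k} (half_graph k) (half_graph_mis k t)"
    using t(1) by (auto simp: independent_set_def half_graph_mis_def half_graph_def)
  ultimately show ?thesis
    using assms t(1) by (auto simp: maximal_independent_set_def)
qed

lemma i_max_half_graph_le: "i_max {0..<2*k} (half_graph k) \<le> k + 1"
proof -
  have "{S. maximal_independent_set {0..<2*k} (half_graph k) S} \<subseteq> half_graph_mis k ` {0..k}"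
    using maximal_independent_set_half_graph by fastforce
  then have "i_max {0..<2*k} (half_graph k) \<le> card (half_graph_mis k ` {0..k})"
    unfolding i_max_def by (intro card_mono) auto
  also have "\<dots> \<le> k + 1"
    using card_image_le[of "{0..k}" "half_graph_mis k"] by simp
  finally show ?thesis .
qed

lemma i_max_half_graph:
  assumes "k \<ge> 1"
  shows "i_max {0..<2*k} (half_graph k) = k + 1"
proof -
  interpret bipartition "{0..<2*k}" "half_graph k" "{0..<k}" "{k..<2*k}"
    by (rule half_graph_bipartition)
  have "\<lceil>real (2*k) / 2\<rceil> + 1 \<le> int (i_max {0..<2*k} (half_graph k))"
    using i_max_lower_bound[OF graph connected_half_graph[OF assms] twin_free_half_graph
        bipartite_half_graph] assms
    by simp
  then show ?thesis
    using i_max_half_graph_le[of k] by simp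
qed

theorem theorem1p3:
  shows "(\<forall>(V :: 'a set) E. simple_graph V E \<and> connected_graph V E \<and> twin_free V E
            \<and> bipartite V E \<and> card V \<ge> 2
            \<longrightarrow> \<lceil>real (card V) / 2\<rceil> + 1 \<le> int (i_max V E))
       \<and> (\<forall>N. \<exists>(V :: nat set) E. simple_graph V E \<and> connected_graph V E \<and> twin_free V E
            \<and> bipartite V E \<and> card V \<ge> 2 \<and> card V \<ge> N
            \<and> int (i_max V E) = \<lceil>real (card V) / 2\<rceil> + 1)"
proof (intro conjI allI impI)
  fix V :: "'a set" and E
  assume "simple_graph V E \<and> connected_graph V E \<and> twin_free V E \<and> bipartite V E \<and> card V \<ge> 2"
  then show "\<lceil>real (card V) / 2\<rceil> + 1 \<le> int (i_max V E)"
    using i_max_lower_bound by blast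
next
  fix N :: nat
  define k where "k = max 1 N"
  have "k \<ge> 1" "2*k \<ge> N"
    by (simp_all add: k_def)
  moreover have "simple_graph {0..<2*k} (half_graph k)"
    using bipartition.graph[OF half_graph_bipartition] .
  ultimately show "\<exists>(V :: nat set) E. simple_graph V E \<and> connected_graph V E \<and> twin_free V E
            \<and> bipartite V E \<and> card V \<ge> 2 \<and> card V \<ge> N
            \<and> int (i_max V E) = \<lceil>real (card V) / 2\<rceil> + 1"
    using connected_half_graph twin_free_half_graph bipartite_half_graph i_max_half_graph
    by (intro exI[of _ "{0..<2*k}"] exI[of _ "half_graph k"]) auto
qed

end
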